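(* Let $b,c\in Z^{10}$ with $\sum_i b_i=\sum_i c_i=0$. Let $j\in\{1,3,5,7,9\}$ and let $i_1,i_2,i_3,i_4$ be the remaining four odd indices listed in cyclic order. Assume $t\mid B_j$, $t\mid C_j$, and $t\nmid B_{i_l}$, $t\nmid C_{i_l}$ for $l=1,2,3,4$. Assume moreover $t\nmid B_{i_1}+B_{i_2}$, $t\mid B_{i_2}+B_{i_3}$, $t\nmid C_{i_1}+C_{i_2}$ and $t\mid C_{i_2}+C_{i_3}$. Then $\mathbb{M}(b)$ and $\mathbb{M}(c)$ are isomorphic $B_{5,10}$-modules.
   Context: Let $Z=\mathbb{C}[[t]]$. Let $\Gamma_{10}$ be the quiver with vertices $0,1,\dots,9$ (indices taken mod $10$) on a cycle and arrows $x_i\colon i-1\to i$, $y_i\colon i\to i-1$ for $i=1,\dots,10$. Let $B_{5,10}$ be the completed path algebra of $\Gamma_{10}$ modulo the closed ideal generated by $xy=yx$ and $x^5=y^5$ at every vertex. For $b=(b_1,\dots,b_{10})\in Z^{10}$ with $\sum_i b_i=0$, the $B_{5,10}$-module $\mathbb{M}(b)$ has $V_i=Z\oplus Z$ at every vertex, and for odd $j$: $x_j=\begin{pmatrix} t& b_j\\ 0&1\end{pmatrix}$, $y_j=\begin{pmatrix} 1&-b_j\\0&t\end{pmatrix}$; for even $j$: $x_j=\begin{pmatrix}1&b_j\\0&t\end{pmatrix}$, $y_j=\begin{pmatrix}t&-b_j\\0&1\end{pmatrix}$. An isomorphism $\mathbb{M}(b)\to\mathbb{M}(c)$ is a family of invertible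 $Z$-linear maps $\varphi_i\colon Z^2\to Z^2$ commuting with all $x_i$ and $y_i$. For odd $i$ write $B_i=b_i+b_{i+1}$ and $C_i=c_i+c_{i+1}$ (indices mod $10$). *)

theory Defs
  imports "HOL-Analysis.Analysis" "HOL-Computational_Algebra.Formal_Power_Series"
begin

text \<open>Z = C[[t]] is the type complex fps; t is fps_X.
  Z-linear maps Z^2 -> Z^2 are 2x2 matrices over Z acting on column vectors.\<close>

type_synonym zmat = "complex fps ^ 2 ^ 2"

definition mat2 :: "complex fps \<Rightarrow> complex fps \<Rightarrow> complex fps \<Rightarrow> complex fps \<Rightarrow> zmat" where
  "mat2 a b c d = (\<chi> i j. if i = 1 then (if j = 1 then a else b) else (if j = 1 then c else d))"

text \<open>The arrow x_j : V_(j-1) -> V_j of M(b), for j = 1..10 (b indexed by 1..10).\<close>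
definition xmap :: "(nat \<Rightarrow> complex fps) \<Rightarrow> nat \<Rightarrow> zmat" where
  "xmap b j = (if odd j then mat2 fps_X (b j) 0 1 else mat2 1 (b j) 0 fps_X)"

text \<open>The arrow y_j : V_j -> V_(j-1) of M(b).\<close>
definition ymap :: "(nat \<Rightarrow> complex fps) \<Rightarrow> nat \<Rightarrow> zmat" where
  "ymap b j = (if odd j then mat2 1 (- b j) 0 fps_X else mat2 fps_X (- b j) 0 1)"

definition M_iso :: "(nat \<Rightarrow> complex fps) \<Rightarrow> (nat \<Rightarrow> complex fps) \<Rightarrow> bool" where
  "M_iso b c \<longleftrightarrow> (\<exists>\<phi> :: nat \<Rightarrow> zmat.
     (\<forall>i<10. invertible (\<phi> i)) \<and>
     (\<forall>j\<in>{1..10}. \<phi> (j mod 10) ** xmap b j = xmap c j ** \<phi> (j - 1) \<and>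
                   \<phi> (j - 1) ** ymap b j = ymap c j ** \<phi> (j mod 10)))"

definition Bsum :: "(nat \<Rightarrow> complex fps) \<Rightarrow> nat \<Rightarrow> complex fps" where
  "Bsum b i = b i + b (i mod 10 + 1)"

text \<open>The l-th odd index after j in cyclic order (1..10 range).\<close>
definition cyc :: "nat \<Rightarrow> nat \<Rightarrow> nat" where
  "cyc j l = (j + 2 * l - 1) mod 10 + 1"

end

theory Submission imports Defs begin

(* The isomorphism is explicit. Write S_i = b_1 + ... + b_i and T_i = c_1 + ... + c_i for the
   partial sums, and E_i = T_i s - S_i p - T_i S_i r for constants p, s, r. Take
   phi_i = [[p + T_i r, E_i], [r, s - S_i r]] at odd vertices and
   phi_i = [[p + T_i r, E_i / t], [t r, s - S_i r]] at even vertices.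
   All these matrices have determinant p s, and commuting with the arrows reduces to ring
   identities. The only obstruction is that t must divide E_i at the even vertices, i.e. the
   points (x_i, y_i) of constant terms of (S_i, T_i) must lie on the conic y s - x p - x y r = 0.
   Rotating the cycle by two vertices reduces to j = 1, where the hypotheses force these points to
   be 0, (u_1, v_1) or (u_2, v_2) with u_1 <> u_2 and v_1 <> v_2, and such a conic with p s <> 0
   exists. *)

lemma fps_X_dvd_iff_nth_0: "fps_X dvd (f :: 'a::comm_ring_1 fps) \<longleftrightarrow> fps_nth f 0 = 0"
proof
  assume "fps_X dvd f"
  then show "fps_nth f 0 = 0" by (auto elim: dvdE)
next
  assume "fps_nth f 0 = 0"
  then have "f = fps_X * fps_shift 1 f"
    by (intro fps_ext) simp
  then show "fps_X dvd f" by (metis dvd_triv_left)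
qed

lemma fps_X_mult_shift_1: "fps_X dvd (f :: 'a::comm_ring_1 fps) \<Longrightarrow> fps_X * fps_shift 1 f = f"
  by (metis dvdE fps_shift_times_fps_X' mult.commute)

lemma mat2_mult: "mat2 a b c d ** mat2 a' b' c' d' =
    mat2 (a*a' + b*c') (a*b' + b*d') (c*a' + d*c') (c*b' + d*d')"
  unfolding mat2_def matrix_matrix_mult_def by (simp add: vec_eq_iff forall_2 sum_2)

lemma mat2_eq_iff: "mat2 a b c d = mat2 a' b' c' d' \<longleftrightarrow> a = a' \<and> b = b' \<and> c = c' \<and> d = d'"
  unfolding mat2_def by (auto simp: vec_eq_iff forall_2)

lemma mat_1_eq_mat2: "mat 1 = mat2 1 0 0 1"
  unfolding mat2_def mat_def by (simp add: vec_eq_iff forall_2)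

lemma invertible_mat2:
  assumes "is_unit (a*d - b*c)"
  shows "invertible (mat2 a b c d)"
proof -
  from assms obtain q where q: "1 = (a*d - b*c) * q" by (rule dvdE)
  have "mat2 a b c d ** mat2 (q*d) (- q*b) (- q*c) (q*a) = mat 1"
       "mat2 (q*d) (- q*b) (- q*c) (q*a) ** mat2 a b c d = mat 1"
    unfolding mat2_mult mat_1_eq_mat2 mat2_eq_iff using q by (simp_all add: algebra_simps)
  then show ?thesis unfolding invertible_def by blast
qed

definition corner :: "complex fps \<Rightarrow> complex fps \<Rightarrow> complex fps \<Rightarrow> complex fps \<Rightarrow> complex fps \<Rightarrow> complex fps" where
  "corner p s r C B = C * s - B * p - C * B * r"

definition odd_frame :: "complex fps \<Rightarrow> complex fps \<Rightarrow> complex fps \<Rightarrow> complex fps \<Rightarrow> complex fps \<Rightarrow> zmat" where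
  "odd_frame p s r C B = mat2 (p + C * r) (corner p s r C B) r (s - B * r)"

definition even_frame :: "complex fps \<Rightarrow> complex fps \<Rightarrow> complex fps \<Rightarrow> complex fps \<Rightarrow> complex fps \<Rightarrow> zmat" where
  "even_frame p s r C B = mat2 (p + C * r) (fps_shift 1 (corner p s r C B)) (fps_X * r) (s - B * r)"

lemma frame_det: "(p + C * r) * (s - B * r) - corner p s r C B * r = p * s"
  unfolding corner_def by (simp add: algebra_simps)

lemma invertible_odd_frame:
  "is_unit p \<Longrightarrow> is_unit s \<Longrightarrow> invertible (odd_frame p s r C B)"
  unfolding odd_frame_def by (intro invertible_mat2) (simp only: frame_det is_unit_mult_iff)

lemma invertible_even_frame:
  assumes "is_unit p" "is_unit s" "fps_X dvd corner p s r C B"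
  shows "invertible (even_frame p s r C B)"
proof -
  have "fps_shift 1 (corner p s r C B) * (fps_X * r) = corner p s r C B * r"
    using fps_X_mult_shift_1[OF assms(3)] by (simp add: ac_simps)
  then show ?thesis unfolding even_frame_def using assms(1,2)
    by (intro invertible_mat2) (simp only: frame_det is_unit_mult_iff)
qed

lemma frames_intertwine_odd_arrow:
  assumes "fps_X dvd corner p s r C B"
  shows "odd_frame p s r (C + \<gamma>) (B + \<beta>) ** mat2 fps_X \<beta> 0 1
           = mat2 fps_X \<gamma> 0 1 ** even_frame p s r C B"
    and "even_frame p s r C B ** mat2 1 (- \<beta>) 0 fps_X
           = mat2 1 (- \<gamma>) 0 fps_X ** odd_frame p s r (C + \<gamma>) (B + \<beta>)"
proof -
  define w where "w = fps_shift 1 (corner p s r C B)"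
  have w: "fps_X * w = C * s - B * p - C * B * r"
    unfolding w_def fps_X_mult_shift_1[OF assms] by (simp add: corner_def)
  have frames: "even_frame p s r C B = mat2 (p + C * r) w (fps_X * r) (s - B * r)"
    "odd_frame p s r (C + \<gamma>) (B + \<beta>) = mat2 (p + (C + \<gamma>) * r)
       ((C + \<gamma>) * s - (B + \<beta>) * p - (C + \<gamma>) * (B + \<beta>) * r) r (s - (B + \<beta>) * r)"
    unfolding even_frame_def odd_frame_def corner_def w_def by simp_all
  show "odd_frame p s r (C + \<gamma>) (B + \<beta>) ** mat2 fps_X \<beta> 0 1
           = mat2 fps_X \<gamma> 0 1 ** even_frame p s r C B"
    unfolding frames mat2_mult mat2_eq_iff w by (simp add: algebra_simps)
  show "even_frame p s r C B ** mat2 1 (- \<beta>) 0 fps_X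
           = mat2 1 (- \<gamma>) 0 fps_X ** odd_frame p s r (C + \<gamma>) (B + \<beta>)"
    unfolding frames mat2_mult mat2_eq_iff mult.commute[of w] w by (simp add: algebra_simps)
qed

lemma frames_intertwine_even_arrow:
  assumes "fps_X dvd corner p s r (C + \<gamma>) (B + \<beta>)"
  shows "even_frame p s r (C + \<gamma>) (B + \<beta>) ** mat2 1 \<beta> 0 fps_X
           = mat2 1 \<gamma> 0 fps_X ** odd_frame p s r C B"
    and "odd_frame p s r C B ** mat2 fps_X (- \<beta>) 0 1
           = mat2 fps_X (- \<gamma>) 0 1 ** even_frame p s r (C + \<gamma>) (B + \<beta>)"
proof -
  define w where "w = fps_shift 1 (corner p s r (C + \<gamma>) (B + \<beta>))"
  have w: "fps_X * w = (C + \<gamma>) * s - (B + \<beta>) * p - (C + \<gamma>) * (B + \<beta>) * r"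
    unfolding w_def fps_X_mult_shift_1[OF assms] by (simp add: corner_def)
  have frames: "even_frame p s r (C + \<gamma>) (B + \<beta>)
       = mat2 (p + (C + \<gamma>) * r) w (fps_X * r) (s - (B + \<beta>) * r)"
    "odd_frame p s r C B = mat2 (p + C * r) (C * s - B * p - C * B * r) r (s - B * r)"
    unfolding even_frame_def odd_frame_def corner_def w_def by simp_all
  show "even_frame p s r (C + \<gamma>) (B + \<beta>) ** mat2 1 \<beta> 0 fps_X
           = mat2 1 \<gamma> 0 fps_X ** odd_frame p s r C B"
    unfolding frames mat2_mult mat2_eq_iff mult.commute[of w] w by (simp add: algebra_simps)
  show "odd_frame p s r C B ** mat2 fps_X (- \<beta>) 0 1
           = mat2 fps_X (- \<gamma>) 0 1 ** even_frame p s r (C + \<gamma>) (B + \<beta>)"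
    unfolding frames mat2_mult mat2_eq_iff w by (simp add: algebra_simps)
qed

definition phi :: "complex fps \<Rightarrow> complex fps \<Rightarrow> complex fps \<Rightarrow>
    (nat \<Rightarrow> complex fps) \<Rightarrow> (nat \<Rightarrow> complex fps) \<Rightarrow> nat \<Rightarrow> zmat" where
  "phi p s r b c i = (if even i then even_frame p s r (sum c {1..i}) (sum b {1..i})
                                else odd_frame p s r (sum c {1..i}) (sum b {1..i}))"

lemma phi_intertwines:
  assumes "\<And>i. i \<in> {k, Suc k} \<Longrightarrow> even i \<Longrightarrow> fps_X dvd corner p s r (sum c {1..i}) (sum b {1..i})"
  shows "phi p s r b c (Suc k) ** xmap b (Suc k) = xmap c (Suc k) ** phi p s r b c k"
    and "phi p s r b c k ** ymap b (Suc k) = ymap c (Suc k) ** phi p s r b c (Suc k)"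
proof -
  have sums: "sum b {1..Suc k} = sum b {1..k} + b (Suc k)" "sum c {1..Suc k} = sum c {1..k} + c (Suc k)"
    by simp_all
  have "phi p s r b c (Suc k) ** xmap b (Suc k) = xmap c (Suc k) ** phi p s r b c k \<and>
        phi p s r b c k ** ymap b (Suc k) = ymap c (Suc k) ** phi p s r b c (Suc k)"
  proof (cases "even k")
    case True
    then show ?thesis using frames_intertwine_odd_arrow[OF assms[of k]]
      by (simp add: phi_def xmap_def ymap_def sums)
  next
    case False
    then show ?thesis using frames_intertwine_even_arrow[OF assms[of "Suc k", unfolded sums]]
      by (simp add: phi_def xmap_def ymap_def sums)
  qed
  then show "phi p s r b c (Suc k) ** xmap b (Suc k) = xmap c (Suc k) ** phi p s r b c k"
    and "phi p s r b c k ** ymap b (Suc k) = ymap c (Suc k) ** phi p s r b c (Suc k)"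
    by blast+
qed

lemma M_iso_if_corners_divisible:
  assumes sum_b: "(\<Sum>i=1..10. b i) = 0" and sum_c: "(\<Sum>i=1..10. c i) = 0"
    and "is_unit p" "is_unit s"
    and corners: "\<And>i. i \<in> {2, 4, 6, 8} \<Longrightarrow> fps_X dvd corner p s r (sum c {1..i}) (sum b {1..i})"
  shows "M_iso b c"
proof -
  have corner_0: "corner p s r 0 0 = 0" by (simp add: corner_def)
  have dvd: "fps_X dvd corner p s r (sum c {1..i}) (sum b {1..i})" if "i \<le> 10" "even i" for i
  proof -
    from that have "i \<in> {0, 10} \<or> i \<in> {2, 4, 6, 8}" by (auto elim!: evenE)
    then show ?thesis using corners sum_b sum_c corner_0 by auto
  qed
  have phi_mod: "phi p s r b c (j mod 10) = phi p s r b c j" if "j \<in> {1..10}" for j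
    using that sum_b sum_c by (cases "j = 10") (simp_all add: phi_def)
  show ?thesis unfolding M_iso_def
  proof (intro exI conjI allI impI ballI)
    fix i :: nat assume "i < 10"
    then show "invertible (phi p s r b c i)"
      using assms(3,4) dvd[of i] by (simp add: phi_def invertible_odd_frame invertible_even_frame)
  next
    fix j :: nat assume j: "j \<in> {1..10}"
    then obtain k where k: "j = Suc k" "k < 10" by (cases j) auto
    have "fps_X dvd corner p s r (sum c {1..i}) (sum b {1..i})" if "i \<in> {k, Suc k}" "even i" for i
      using that k dvd by auto
    note intertwines = phi_intertwines[of k p s r c b, OF this]
    show "phi p s r b c (j mod 10) ** xmap b j = xmap c j ** phi p s r b c (j - 1)"
      "phi p s r b c (j - 1) ** ymap b j = ymap c j ** phi p s r b c (j mod 10)"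
      using intertwines unfolding phi_mod[OF j] by (simp_all add: k)
  qed
qed

lemma conic_through_two_points:
  fixes u\<^sub>1 u\<^sub>2 v\<^sub>1 v\<^sub>2 :: "'a::field"
  assumes "u\<^sub>1 \<noteq> 0" "u\<^sub>2 \<noteq> 0" "u\<^sub>1 \<noteq> u\<^sub>2" "v\<^sub>1 \<noteq> 0" "v\<^sub>2 \<noteq> 0" "v\<^sub>1 \<noteq> v\<^sub>2"
  obtains p s r where "p \<noteq> 0" "s \<noteq> 0"
    "v\<^sub>1 * s - u\<^sub>1 * p - v\<^sub>1 * u\<^sub>1 * r = 0" "v\<^sub>2 * s - u\<^sub>2 * p - v\<^sub>2 * u\<^sub>2 * r = 0"
proof -
  \<comment> \<open>Divided by \<open>u v\<close>, the condition reads \<open>s / u - p / v = r\<close>;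
     subtracting its two instances shows that \<open>p\<close> and \<open>s\<close> below solve it.\<close>
  define p s where "p = 1 / u\<^sub>1 - 1 / u\<^sub>2" and "s = 1 / v\<^sub>1 - 1 / v\<^sub>2"
  define r where "r = s / u\<^sub>1 - p / v\<^sub>1"
  show thesis
  proof (rule that)
    show "p \<noteq> 0" "s \<noteq> 0" using assms by (simp_all add: p_def s_def field_simps)
    show "v\<^sub>1 * s - u\<^sub>1 * p - v\<^sub>1 * u\<^sub>1 * r = 0"
      using assms by (simp add: r_def field_simps)
    show "v\<^sub>2 * s - u\<^sub>2 * p - v\<^sub>2 * u\<^sub>2 * r = 0"
      using assms by (simp add: p_def s_def r_def field_simps)
  qed
qed

definition pair_sum_pattern :: "(nat \<Rightarrow> complex fps) \<Rightarrow> nat \<Rightarrow> bool" where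
  "pair_sum_pattern b j \<longleftrightarrow> (\<Sum>i=1..10. b i) = 0 \<and> fps_X dvd Bsum b j
     \<and> (\<forall>l\<in>{1..4}. \<not> fps_X dvd Bsum b (cyc j l))
     \<and> \<not> fps_X dvd (Bsum b (cyc j 1) + Bsum b (cyc j 2))
     \<and> fps_X dvd (Bsum b (cyc j 2) + Bsum b (cyc j 3))"

lemma sum_upto_even_eq_sum_Bsum:
  "n \<le> 5 \<Longrightarrow> sum b {1..2 * n} = (\<Sum>m<n. Bsum b (2 * m + 1))"
proof (induction n)
  case (Suc n)
  have "sum b {1..2 * Suc n} = sum b {1..2 * n} + (b (2 * n + 1) + b (2 * n + 2))"
    by (simp add: add_ac)
  moreover have "Bsum b (2 * n + 1) = b (2 * n + 1) + b (2 * n + 2)"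
    using Suc.prems by (simp add: Bsum_def)
  ultimately show ?case using Suc by simp
qed simp

lemma pair_sum_pattern_1_partial_sums:
  assumes "pair_sum_pattern b 1"
  defines "x i \<equiv> fps_nth (sum b {1..i}) 0"
  shows "x 2 = 0" "x 8 = x 4" "x 4 \<noteq> 0" "x 6 \<noteq> 0" "x 4 \<noteq> x 6"
proof -
  define \<beta> where "\<beta> m = fps_nth (Bsum b (2 * m + 1)) 0" for m
  have x_eq: "x (2 * n) = (\<Sum>m<n. \<beta> m)" if "n \<le> 5" for n
    unfolding x_def \<beta>_def sum_upto_even_eq_sum_Bsum[OF that] fps_sum_nth ..
  have not_dvd: "\<not> fps_X dvd Bsum b (cyc 1 l)" if "l \<in> {1..4}" for l
    using assms(1) that unfolding pair_sum_pattern_def by blast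
  have cyc_1: "cyc 1 1 = 3" "cyc 1 2 = 5" "cyc 1 3 = 7" by (simp_all add: cyc_def)
  have pattern: "fps_X dvd Bsum b 1" "\<not> fps_X dvd Bsum b 3" "\<not> fps_X dvd Bsum b 5"
      "\<not> fps_X dvd (Bsum b 3 + Bsum b 5)" "fps_X dvd (Bsum b 5 + Bsum b 7)"
    using assms(1) not_dvd[of 1] not_dvd[of 2] unfolding pair_sum_pattern_def cyc_1 by simp_all
  have "\<beta> 0 = 0" "\<beta> 1 \<noteq> 0" "\<beta> 2 \<noteq> 0" "\<beta> 1 + \<beta> 2 \<noteq> 0" "\<beta> 2 + \<beta> 3 = 0"
    using pattern by (simp_all add: \<beta>_def fps_X_dvd_iff_nth_0)
  moreover have "x 2 = \<beta> 0" "x 4 = \<beta> 0 + \<beta> 1" "x 6 = \<beta> 0 + \<beta> 1 + \<beta> 2" "x 8 = \<beta> 0 + \<beta> 1 + \<beta> 2 + \<beta> 3"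
    using x_eq[of 1] x_eq[of 2] x_eq[of 3] x_eq[of 4] by (simp_all add: eval_nat_numeral)
  ultimately show "x 2 = 0" "x 8 = x 4" "x 4 \<noteq> 0" "x 6 \<noteq> 0" "x 4 \<noteq> x 6"
    by (simp_all add: add.assoc)
qed

lemma M_iso_pattern_1:
  assumes "pair_sum_pattern b 1" "pair_sum_pattern c 1"
  shows "M_iso b c"
proof -
  define x y where "x i = fps_nth (sum b {1..i}) 0" and "y i = fps_nth (sum c {1..i}) 0" for i
  note x = pair_sum_pattern_1_partial_sums[OF assms(1), folded x_def]
  note y = pair_sum_pattern_1_partial_sums[OF assms(2), folded y_def]
  obtain p s r where "p \<noteq> 0" "s \<noteq> 0"
    and on_conic: "y 4 * s - x 4 * p - y 4 * x 4 * r = 0" "y 6 * s - x 6 * p - y 6 * x 6 * r = 0"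
    using conic_through_two_points[of "x 4" "x 6" "y 4" "y 6"] x y by blast
  have corner_nth_0: "fps_nth (corner (fps_const p) (fps_const s) (fps_const r) (sum c {1..i}) (sum b {1..i})) 0
      = y i * s - x i * p - y i * x i * r" for i
    by (simp add: corner_def x_def y_def)
  show ?thesis
  proof (rule M_iso_if_corners_divisible)
    show "(\<Sum>i=1..10. b i) = 0" "(\<Sum>i=1..10. c i) = 0"
      using assms by (simp_all add: pair_sum_pattern_def)
    show "is_unit (fps_const p)" "is_unit (fps_const s)"
      using \<open>p \<noteq> 0\<close> \<open>s \<noteq> 0\<close> by simp_all
    fix i :: nat assume "i \<in> {2, 4, 6, 8}"
    then show "fps_X dvd corner (fps_const p) (fps_const s) (fps_const r) (sum c {1..i}) (sum b {1..i})"
      unfolding fps_X_dvd_iff_nth_0 corner_nth_0 using x y on_conic by auto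
  qed
qed

lemma atLeastAtMost_1_10: "{1..10} = {1, 2, 3, 4, 5, 6, 7, 8, 9, 10 :: nat}"
  by (auto simp: eval_nat_numeral le_Suc_eq)

definition rotate2 :: "nat \<Rightarrow> nat" where
  "rotate2 k = (k + 1) mod 10 + 1"

lemma odd_rotate2_iff: "odd (rotate2 k) \<longleftrightarrow> odd k"
  unfolding rotate2_def by (simp add: dvd_mod_iff)

lemma rotate2_mod_Suc: "rotate2 k mod 10 + 1 = rotate2 (k mod 10 + 1)"
  by (simp only: rotate2_def mod_add_left_eq add.assoc)

lemma Bsum_comp_rotate2: "Bsum (b \<circ> rotate2) k = Bsum b (rotate2 k)"
  unfolding Bsum_def comp_apply rotate2_mod_Suc ..

lemma rotate2_cyc:
  assumes "1 \<le> l" shows "rotate2 (cyc j l) = cyc (rotate2 j) l"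
proof -
  have "rotate2 (cyc j l) = (j + 2 * l - 1 + (1 + 1)) mod 10 + 1"
    by (simp only: rotate2_def cyc_def mod_add_left_eq add.assoc)
  also have "j + 2 * l - 1 + (1 + 1) = (j + 1) + 2 * l" using assms by linarith
  also have "((j + 1) + 2 * l) mod 10 + 1 = cyc (rotate2 j) l"
    unfolding rotate2_def cyc_def by (simp add: mod_add_left_eq)
  finally show ?thesis .
qed

lemma bij_betw_rotate2: "bij_betw rotate2 {1..10} {1..10}"
proof (rule bij_betw_byWitness[where f' = "\<lambda>k. (k + 7) mod 10 + 1"])
  show "\<forall>k\<in>{1..10}. (rotate2 k + 7) mod 10 + 1 = k" "\<forall>k\<in>{1..10}. rotate2 ((k + 7) mod 10 + 1) = k"
    "rotate2 ` {1..10} \<subseteq> {1..10}" "(\<lambda>k::nat. (k + 7) mod 10 + 1) ` {1..10} \<subseteq> {1..10}"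
    unfolding atLeastAtMost_1_10 rotate2_def by simp_all
qed

lemma sum_comp_rotate2: "(\<Sum>i=1..10. (b \<circ> rotate2) i) = (\<Sum>i=1..10. b i)"
  unfolding comp_apply using bij_betw_rotate2 by (rule sum.reindex_bij_betw)

lemma pair_sum_pattern_comp_rotate2:
  "pair_sum_pattern b (rotate2 j) \<Longrightarrow> pair_sum_pattern (b \<circ> rotate2) j"
  unfolding pair_sum_pattern_def Bsum_comp_rotate2 sum_comp_rotate2 by (simp add: rotate2_cyc)

lemma M_iso_comp_rotate2:
  assumes "M_iso (b \<circ> rotate2) (c \<circ> rotate2)"
  shows "M_iso b c"
proof -
  from assms obtain \<phi> where invertible: "\<forall>i<10. invertible (\<phi> i)"
    and intertwines: "\<forall>j\<in>{1..10}.
        \<phi> (j mod 10) ** xmap (b \<circ> rotate2) j = xmap (c \<circ> rotate2) j ** \<phi> (j - 1) \<and>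
        \<phi> (j - 1) ** ymap (b \<circ> rotate2) j = ymap (c \<circ> rotate2) j ** \<phi> (j mod 10)"
    unfolding M_iso_def by blast
  \<comment> \<open>vertex \<open>v\<close> of \<open>M(b)\<close> is vertex \<open>v - 2\<close> of \<open>M(b \<circ> rotate2)\<close>\<close>
  define \<psi> where "\<psi> v = \<phi> ((v + 8) mod 10)" for v
  show ?thesis unfolding M_iso_def
  proof (intro exI conjI allI impI ballI)
    fix i :: nat assume "i < 10"
    then show "invertible (\<psi> i)" using invertible by (simp add: \<psi>_def)
  next
    fix J :: nat assume J: "J \<in> {1..10}"
    define j where "j = (J + 7) mod 10 + 1"
    have j: "j \<in> {1..10}" "rotate2 j = J"
      using J unfolding atLeastAtMost_1_10 j_def rotate2_def by auto
    have "(J mod 10 + 8) mod 10 = j mod 10" "(J - 1 + 8) mod 10 = j - 1"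
      using J unfolding atLeastAtMost_1_10 j_def by auto
    then have \<psi>: "\<psi> (J mod 10) = \<phi> (j mod 10)" "\<psi> (J - 1) = \<phi> (j - 1)"
      unfolding \<psi>_def by simp_all
    have "xmap (b \<circ> rotate2) j = xmap b J" "xmap (c \<circ> rotate2) j = xmap c J"
         "ymap (b \<circ> rotate2) j = ymap b J" "ymap (c \<circ> rotate2) j = ymap c J"
      using j(2) odd_rotate2_iff[of j] by (simp_all add: xmap_def ymap_def)
    with intertwines[rule_format, OF j(1)]
    show "\<psi> (J mod 10) ** xmap b J = xmap c J ** \<psi> (J - 1)"
      "\<psi> (J - 1) ** ymap b J = ymap c J ** \<psi> (J mod 10)"
      unfolding \<psi> by simp_all
  qed
qed

lemma M_iso_pattern:
  assumes "j \<in> {1, 3, 5, 7, 9}" "pair_sum_pattern b j" "pair_sum_pattern c j"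
  shows "M_iso b c"
proof -
  have "M_iso b c" if "n \<le> 4" "pair_sum_pattern b (2 * n + 1)" "pair_sum_pattern c (2 * n + 1)" for n b c
    using that
  proof (induction n arbitrary: b c)
    case 0
    then show ?case using M_iso_pattern_1 by simp
  next
    case (Suc n)
    then have "n \<le> 4" and rotate2_odd: "rotate2 (2 * n + 1) = 2 * Suc n + 1"
      by (simp_all add: rotate2_def)
    have "pair_sum_pattern (b \<circ> rotate2) (2 * n + 1)" "pair_sum_pattern (c \<circ> rotate2) (2 * n + 1)"
      using Suc.prems(2,3) unfolding rotate2_odd[symmetric] by (simp_all only: pair_sum_pattern_comp_rotate2)
    with \<open>n \<le> 4\<close> have "M_iso (b \<circ> rotate2) (c \<circ> rotate2)" by (rule Suc.IH)
    then show ?case by (rule M_iso_comp_rotate2)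
  qed
  moreover have "(j - 1) div 2 \<le> 4" "j = 2 * ((j - 1) div 2) + 1" using assms(1) by auto
  ultimately show ?thesis using assms(2,3) by metis
qed

theorem theorem2p4:
  fixes b c :: "nat \<Rightarrow> complex fps" and j :: nat
  assumes "(\<Sum>i=1..10. b i) = 0" and "(\<Sum>i=1..10. c i) = 0"
    and "j \<in> {1, 3, 5, 7, 9}"
    and "fps_X dvd Bsum b j" and "fps_X dvd Bsum c j"
    and "\<forall>l\<in>{1..4}. \<not> fps_X dvd Bsum b (cyc j l)"
    and "\<forall>l\<in>{1..4}. \<not> fps_X dvd Bsum c (cyc j l)"
    and "\<not> fps_X dvd (Bsum b (cyc j 1) + Bsum b (cyc j 2))"
    and "fps_X dvd (Bsum b (cyc j 2) + Bsum b (cyc j 3))"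
    and "\<not> fps_X dvd (Bsum c (cyc j 1) + Bsum c (cyc j 2))"
    and "fps_X dvd (Bsum c (cyc j 2) + Bsum c (cyc j 3))"
  shows "M_iso b c"
proof (rule M_iso_pattern)
  show "j \<in> {1, 3, 5, 7, 9}" by fact
  show "pair_sum_pattern b j" "pair_sum_pattern c j"
    using assms by (simp_all add: pair_sum_pattern_def)
qed

end
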